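(* Let $k$ be a number field, $\mathcal G$ a finite group, $H$ a finite abelian group, $\mu:\mathcal G\to\mathrm{Aut}(H)$ an action, and $\tau\in H$. Then $G_{k,\mu,\tau}$ is a subgroup of $\mathrm{Gal}(k(\zeta_{o(\tau)})/k)$.
   Context: $o(\tau)$ is the order of $\tau$ and $\zeta_t$ a primitive $t$-th root of unity. $\nu_{k,\tau}:\mathrm{Gal}(k(\zeta_{o(\tau)})/k)\to(\mathbb Z/o(\tau))^*$ is given by $g(\zeta_{o(\tau)})=\zeta_{o(\tau)}^{\nu_{k,\tau}(g)}$, and $G_{k,\mu,\tau}=\{g\in\mathrm{Gal}(k(\zeta_{o(\tau)})/k):\exists g_1\in\mathcal G,\ \mu(g_1)(\tau)=\tau^{\nu_{k,\tau}(g)}\}$. *)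

theory Defs
  imports "HOL-Analysis.Analysis" "HOL-Algebra.Algebra"
begin

text \<open>Subfields of the complex numbers (every number field embeds in the complex numbers).\<close>
definition cx_subfield :: "complex set \<Rightarrow> bool" where
  "cx_subfield K \<longleftrightarrow> 0 \<in> K \<and> 1 \<in> K \<and>
     (\<forall>x\<in>K. \<forall>y\<in>K. x + y \<in> K \<and> x * y \<in> K) \<and> (\<forall>x\<in>K. - x \<in> K) \<and>
     (\<forall>x\<in>K. x \<noteq> 0 \<longrightarrow> inverse x \<in> K)"

definition number_field :: "complex set \<Rightarrow> bool" where
  "number_field k \<longleftrightarrow> cx_subfield k \<and>
     (\<exists>B. finite B \<and> B \<subseteq> k \<and>
        (\<forall>x\<in>k. \<exists>c :: complex \<Rightarrow> rat. x = (\<Sum>b\<in>B. of_rat (c b) * b)))"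

definition field_adjoin :: "complex set \<Rightarrow> complex set \<Rightarrow> complex set" where
  "field_adjoin k S = \<Inter>{K. cx_subfield K \<and> k \<union> S \<subseteq> K}"

definition zeta :: "nat \<Rightarrow> complex" where
  "zeta t = cis (2 * pi / real t)"

text \<open>Gal(K/k): field automorphisms of K fixing k pointwise (extended by the identity outside K).\<close>
definition Gal_set :: "complex set \<Rightarrow> complex set \<Rightarrow> (complex \<Rightarrow> complex) set" where
  "Gal_set K k = {\<sigma>. bij_betw \<sigma> K K \<and>
     (\<forall>x\<in>K. \<forall>y\<in>K. \<sigma> (x + y) = \<sigma> x + \<sigma> y \<and> \<sigma> (x * y) = \<sigma> x * \<sigma> y) \<and>
     (\<forall>x\<in>k. \<sigma> x = x) \<and> (\<forall>x. x \<notin> K \<longrightarrow> \<sigma> x = x)}"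

definition Gal_group :: "complex set \<Rightarrow> complex set \<Rightarrow> (complex \<Rightarrow> complex) monoid" where
  "Gal_group K k = \<lparr>carrier = Gal_set K k, mult = (\<circ>), one = id\<rparr>"

definition cyc_char :: "nat \<Rightarrow> (complex \<Rightarrow> complex) \<Rightarrow> nat" where
  "cyc_char t g = (SOME a. a < t \<and> coprime a t \<and> g (zeta t) = zeta t ^ a)"

definition G_kmt ::
  "complex set \<Rightarrow> ('g, 'c) monoid_scheme \<Rightarrow> ('g \<Rightarrow> 'h \<Rightarrow> 'h) \<Rightarrow> ('h, 'd) monoid_scheme \<Rightarrow> 'h
     \<Rightarrow> (complex \<Rightarrow> complex) set" where
  "G_kmt k GG \<mu> H \<tau> =
     (let t = group.ord H \<tau> in
      {g \<in> Gal_set (field_adjoin k {zeta t}) k.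
         \<exists>g1 \<in> carrier GG. \<mu> g1 \<tau> = \<tau> [^]\<^bsub>H\<^esub> cyc_char t g})"

end

theory Submission
  imports Defs "HOL-Number_Theory.Number_Theory"
begin

text \<open>Let \<open>t = o(\<tau>)\<close>. The cyclotomic character \<open>\<nu>\<close> is multiplicative modulo \<open>t\<close>
  and takes values coprime to \<open>t\<close>. The set of exponents \<open>a\<close> such that \<open>\<tau>\<^sup>a\<close> lies in the
  \<open>\<mu>\<close>-orbit of \<open>\<tau>\<close> contains 1, depends only on \<open>a mod t\<close>, and is closed under products,
  since \<open>\<mu>(g\<^sub>1 h\<^sub>1) \<tau> = \<mu>(g\<^sub>1) (\<tau>\<^sup>b) = \<tau>\<^sup>a\<^sup>b\<close>. Hence the preimage \<open>G\<^sub>k\<^sub>,\<^sub>\<mu>\<^sub>,\<^sub>\<tau>\<close> of this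
  set under \<open>\<nu>\<close> is closed under composition, and by Euler's theorem \<open>\<nu>(g\<^sup>-\<^sup>1) \<equiv> \<nu>(g)^(\<phi>(t) - 1)\<close>,
  so it is also closed under inverses.\<close>

lemma subgroup_character_preimage:
  fixes G (structure) and \<nu> :: "'a \<Rightarrow> nat" and S :: "nat set"
  assumes "group G" and "0 < t"
    and \<nu>_mult: "\<And>g h. g \<in> carrier G \<Longrightarrow> h \<in> carrier G \<Longrightarrow> [\<nu> (g \<otimes>\<^bsub>G\<^esub> h) = \<nu> g * \<nu> h] (mod t)"
    and \<nu>_coprime: "\<And>g. g \<in> carrier G \<Longrightarrow> coprime (\<nu> g) t"
    and one_S: "1 \<in> S"
    and mult_S: "\<And>a b. a \<in> S \<Longrightarrow> b \<in> S \<Longrightarrow> a * b \<in> S"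
    and cong_S: "\<And>a b. [a = b] (mod t) \<Longrightarrow> a \<in> S \<Longrightarrow> b \<in> S"
  shows "subgroup {g \<in> carrier G. \<nu> g \<in> S} G"
proof -
  interpret group G by fact
  have power_S: "a ^ n \<in> S" if "a \<in> S" for a n
    using that by (induction n) (simp_all add: one_S[simplified] mult_S)
  have \<nu>_one: "[\<nu> \<one> = 1] (mod t)"
  proof -
    have "[\<nu> \<one> * \<nu> \<one> = \<nu> \<one> * 1] (mod t)"
      using \<nu>_mult[of \<one> \<one>] by (simp add: cong_sym)
    then show ?thesis
      by (rule cong_mult_lcancel_nat[OF \<nu>_coprime[OF one_closed], THEN iffD1])
  qed
  have \<nu>_inv: "[\<nu> g ^ (totient t - 1) = \<nu> (inv g)] (mod t)" if g: "g \<in> carrier G" for g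
  proof -
    have "[\<nu> g * \<nu> g ^ (totient t - 1) = \<nu> g ^ totient t] (mod t)"
      using \<open>0 < t\<close> by (simp flip: power_Suc)
    also have "[\<nu> g ^ totient t = 1] (mod t)"
      using \<nu>_coprime[OF g] by (rule euler_theorem)
    also have "[1 = \<nu> (g \<otimes> inv g)] (mod t)"
      using g \<nu>_one by (simp add: cong_sym)
    also have "[\<nu> (g \<otimes> inv g) = \<nu> g * \<nu> (inv g)] (mod t)"
      using g by (intro \<nu>_mult) auto
    finally show ?thesis
      by (rule cong_mult_lcancel_nat[OF \<nu>_coprime[OF g], THEN iffD1])
  qed
  show ?thesis
  proof (rule subgroupI)
    show "{g \<in> carrier G. \<nu> g \<in> S} \<noteq> {}"
      using \<nu>_one one_S cong_S[of 1 "\<nu> \<one>"] by (auto simp: cong_sym)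
  next
    fix g assume "g \<in> {g \<in> carrier G. \<nu> g \<in> S}"
    then show "inv g \<in> {g \<in> carrier G. \<nu> g \<in> S}"
      using \<nu>_inv power_S cong_S by blast
  next
    fix g h assume "g \<in> {g \<in> carrier G. \<nu> g \<in> S}" "h \<in> {g \<in> carrier G. \<nu> g \<in> S}"
    then show "g \<otimes> h \<in> {g \<in> carrier G. \<nu> g \<in> S}"
      using \<nu>_mult mult_S cong_S cong_sym by blast
  qed auto
qed

lemma Gal_setD:
  assumes "g \<in> Gal_set K k"
  shows "bij_betw g K K" "\<And>x y. x \<in> K \<Longrightarrow> y \<in> K \<Longrightarrow> g (x + y) = g x + g y"
    "\<And>x y. x \<in> K \<Longrightarrow> y \<in> K \<Longrightarrow> g (x * y) = g x * g y"
    "\<And>x. x \<in> k \<Longrightarrow> g x = x" "\<And>x. x \<notin> K \<Longrightarrow> g x = x"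
  using assms unfolding Gal_set_def by blast+

lemma Gal_setI:
  assumes "bij_betw g K K" "\<And>x y. x \<in> K \<Longrightarrow> y \<in> K \<Longrightarrow> g (x + y) = g x + g y"
    "\<And>x y. x \<in> K \<Longrightarrow> y \<in> K \<Longrightarrow> g (x * y) = g x * g y"
    "\<And>x. x \<in> k \<Longrightarrow> g x = x" "\<And>x. x \<notin> K \<Longrightarrow> g x = x"
  shows "g \<in> Gal_set K k"
  using assms unfolding Gal_set_def by blast

lemma Gal_set_comp:
  assumes g: "g \<in> Gal_set K k" and h: "h \<in> Gal_set K k"
  shows "g \<circ> h \<in> Gal_set K k"
proof (rule Gal_setI)
  note G = Gal_setD[OF g] and Hh = Gal_setD[OF h]
  show "bij_betw (g \<circ> h) K K"
    by (rule bij_betw_trans[OF Hh(1) G(1)])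
  fix x y assume "x \<in> K" "y \<in> K"
  then show "(g \<circ> h) (x + y) = (g \<circ> h) x + (g \<circ> h) y"
    and "(g \<circ> h) (x * y) = (g \<circ> h) x * (g \<circ> h) y"
    by (simp_all add: G(2,3) Hh(2,3) bij_betw_apply[OF Hh(1)])
qed (simp_all add: Gal_setD(4,5)[OF g] Gal_setD(4,5)[OF h])

lemma Gal_set_left_inverse:
  assumes K: "cx_subfield K" and "k \<subseteq> K" and g: "g \<in> Gal_set K k"
  shows "\<exists>g' \<in> Gal_set K k. g' \<circ> g = id"
proof
  note G = Gal_setD[OF g]
  define g' where "g' x = (if x \<in> K then inv_into K g x else x)" for x
  have bij: "bij_betw g' K K"
    using bij_betw_inv_into[OF G(1)] by (rule bij_betw_cong[THEN iffD1, rotated]) (simp add: g'_def)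
  have g'_in: "g' x \<in> K" if "x \<in> K" for x
    using bij_betw_apply[OF bij that] .
  have g_g': "g (g' x) = x" if "x \<in> K" for x
    using G(1) that by (simp add: g'_def bij_betw_inv_into_right)
  have g'_g: "g' (g x) = x" if "x \<in> K" for x
    using G(1) that by (simp add: g'_def bij_betw_apply bij_betw_inv_into_left)
  show "g' \<in> Gal_set K k"
  proof (rule Gal_setI[OF bij])
    fix x y assume xy: "x \<in> K" "y \<in> K"
    have "x + y = g (g' x + g' y)" and "x * y = g (g' x * g' y)"
      using xy G(2,3) g'_in g_g' by simp_all
    moreover have "g' x + g' y \<in> K" "g' x * g' y \<in> K"
      using K xy g'_in unfolding cx_subfield_def by simp_all
    ultimately show "g' (x + y) = g' x + g' y" and "g' (x * y) = g' x * g' y"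
      using g'_g by simp_all
  next
    fix x assume "x \<in> k"
    then show "g' x = x"
      using g'_g[of x] G(4)[of x] \<open>k \<subseteq> K\<close> by auto
  qed (simp add: g'_def)
  show "g' \<circ> g = id"
  proof
    fix x
    show "(g' \<circ> g) x = id x"
      by (cases "x \<in> K") (simp add: g'_g, simp add: G(5) g'_def)
  qed
qed

lemma group_Gal_group:
  assumes "cx_subfield K" and "k \<subseteq> K"
  shows "group (Gal_group K k)"
proof (rule groupI)
  show "\<exists>g'\<in>carrier (Gal_group K k). g' \<otimes>\<^bsub>Gal_group K k\<^esub> g = \<one>\<^bsub>Gal_group K k\<^esub>"
    if "g \<in> carrier (Gal_group K k)" for g
    using Gal_set_left_inverse[OF assms] that by (simp add: Gal_group_def)
qed (auto simp: Gal_group_def Gal_set_comp comp_assoc intro: Gal_setI)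

lemma Gal_set_map_one:
  assumes K: "cx_subfield K" and g: "g \<in> Gal_set K k"
  shows "g 1 = 1"
proof -
  note G = Gal_setD[OF g]
  have K01: "0 \<in> K" "1 \<in> K"
    using K unfolding cx_subfield_def by simp_all
  have "g 0 = g 0 + g 0"
    using G(2)[OF K01(1) K01(1)] by simp
  then have "g 0 = 0"
    by simp
  then have "g 1 \<noteq> 0"
    using K01 bij_betw_imp_inj_on[OF G(1)] by (metis inj_onD zero_neq_one)
  moreover have "g 1 * g 1 = g 1"
    using G(3)[OF K01(2) K01(2)] by simp
  ultimately show ?thesis
    by simp
qed

lemma Gal_set_map_power:
  assumes K: "cx_subfield K" and g: "g \<in> Gal_set K k" and z: "z \<in> K"
  shows "g (z ^ n) = g z ^ n"
proof -
  have "z ^ n \<in> K \<and> g (z ^ n) = g z ^ n"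
  proof (induction n)
    case 0
    then show ?case
      using K Gal_set_map_one[OF K g] by (simp add: cx_subfield_def)
  next
    case (Suc n)
    then show ?case
      using K z Gal_setD(3)[OF g z] by (simp add: cx_subfield_def)
  qed
  then show ?thesis ..
qed

lemma zeta_power_exp: "zeta t ^ n = exp (2 * of_real pi * \<i> * of_nat n / of_nat t)"
proof -
  have "zeta t ^ n = cis (real n * (2 * pi / real t))"
    unfolding zeta_def by (rule Complex.DeMoivre)
  also have "\<dots> = exp (\<i> * complex_of_real (real n * (2 * pi / real t)))"
    by (rule cis_conv_exp)
  finally show ?thesis
    by (simp add: mult.commute mult.left_commute)
qed

lemma zeta_power_eq_iff:
  assumes "0 < t"
  shows "zeta t ^ i = zeta t ^ j \<longleftrightarrow> [i = j] (mod t)"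
  unfolding zeta_power_exp cong_def using assms by (simp add: complex_root_unity_eq)

lemma root_of_unity_eq_zeta_power:
  assumes "0 < t" and "z ^ t = (1 :: complex)"
  obtains j where "z = zeta t ^ j"
  using assms complex_roots_unity[of t] by (auto simp flip: zeta_power_exp)

lemma Gal_set_zeta_image:
  assumes K: "cx_subfield K" and g: "g \<in> Gal_set K k" and z: "zeta t \<in> K" and "0 < t"
  obtains j where "g (zeta t) = zeta t ^ j"
proof -
  have "zeta t ^ t = zeta t ^ 0"
    using zeta_power_eq_iff[OF \<open>0 < t\<close>, of t 0] by (simp add: cong_def)
  then have "g (zeta t) ^ t = 1"
    using Gal_set_map_power[OF K g z, of t] Gal_set_map_one[OF K g] by simp
  then show ?thesis
    using that root_of_unity_eq_zeta_power[OF \<open>0 < t\<close>] by blast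
qed

text \<open>The exponent is a unit modulo \<open>t\<close> because the inverse automorphism supplies its inverse.\<close>

lemma Gal_set_zeta_image_coprime:
  assumes K: "cx_subfield K" and "k \<subseteq> K" and g: "g \<in> Gal_set K k"
    and z: "zeta t \<in> K" and "0 < t"
  shows "\<exists>j. coprime j t \<and> g (zeta t) = zeta t ^ j"
proof -
  obtain j where j: "g (zeta t) = zeta t ^ j"
    using Gal_set_zeta_image[OF K g z \<open>0 < t\<close>] .
  obtain g' where g': "g' \<in> Gal_set K k" "g' \<circ> g = id"
    using Gal_set_left_inverse[OF K \<open>k \<subseteq> K\<close> g] by blast
  obtain i where i: "g' (zeta t) = zeta t ^ i"
    using Gal_set_zeta_image[OF K g'(1) z \<open>0 < t\<close>] .
  have "zeta t ^ 1 = g' (g (zeta t))"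
    using g'(2) by (simp add: fun_eq_iff)
  also have "\<dots> = zeta t ^ (i * j)"
    by (simp add: j i Gal_set_map_power[OF K g'(1) z] power_mult)
  finally have "[1 = i * j] (mod t)"
    by (simp only: zeta_power_eq_iff[OF \<open>0 < t\<close>])
  then have "coprime (i * j) t"
    by (rule cong_imp_coprime) simp
  then have "coprime j t"
    by simp
  with j show ?thesis
    by blast
qed

lemma cyc_char:
  assumes "cx_subfield K" and "k \<subseteq> K" and "g \<in> Gal_set K k" and "zeta t \<in> K" and "0 < t"
  shows "coprime (cyc_char t g) t" and "g (zeta t) = zeta t ^ cyc_char t g"
proof -
  obtain j where "j < t" "coprime j t" "g (zeta t) = zeta t ^ j"
  proof -
    obtain i where "coprime i t" "g (zeta t) = zeta t ^ i"
      using Gal_set_zeta_image_coprime[OF assms] by blast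
    moreover have "zeta t ^ i = zeta t ^ (i mod t)"
      using zeta_power_eq_iff[OF \<open>0 < t\<close>] by (simp add: cong_def)
    ultimately show ?thesis
      using that[of "i mod t"] \<open>0 < t\<close> by simp
  qed
  then have "cyc_char t g < t \<and> coprime (cyc_char t g) t \<and> g (zeta t) = zeta t ^ cyc_char t g"
    unfolding cyc_char_def by (intro someI) blast
  then show "coprime (cyc_char t g) t" and "g (zeta t) = zeta t ^ cyc_char t g"
    by simp_all
qed

lemma cyc_char_comp:
  assumes K: "cx_subfield K" and "k \<subseteq> K" and g: "g \<in> Gal_set K k" and h: "h \<in> Gal_set K k"
    and z: "zeta t \<in> K" and "0 < t"
  shows "[cyc_char t (g \<circ> h) = cyc_char t g * cyc_char t h] (mod t)"
proof -
  note \<nu> = cyc_char(2)[OF K \<open>k \<subseteq> K\<close> _ z \<open>0 < t\<close>]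
  have "zeta t ^ cyc_char t (g \<circ> h) = g (h (zeta t))"
    using \<nu>[OF Gal_set_comp[OF g h]] by simp
  also have "\<dots> = zeta t ^ (cyc_char t g * cyc_char t h)"
    by (simp add: \<nu>[OF h] \<nu>[OF g] Gal_set_map_power[OF K g z] power_mult)
  finally show ?thesis
    by (simp add: zeta_power_eq_iff[OF \<open>0 < t\<close>])
qed

lemma (in group) nat_pow_eq_if_cong_ord:
  assumes "x \<in> carrier G" and "[m = n] (mod ord x)"
  shows "x [^] m = x [^] (n :: nat)"
proof -
  have "int (ord x) dvd int n - int m"
    using cong_sym[OF assms(2)] by (simp add: cong_iff_dvd_diff flip: cong_int_iff)
  then show ?thesis
    using int_pow_eq[OF assms(1), of "int m" "int n"] by (simp add: int_pow_int)
qed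

lemma group_action_of_hom_AutoGroup:
  assumes "group G" and "group H" and "\<mu> \<in> hom G (AutoGroup H)"
  shows "group_action G (carrier H) \<mu>"
  unfolding group_action_def group_hom_def group_hom_axioms_def
  using assms group_BijGroup
  by (auto simp: hom_def AutoGroup_def BijGroup_def auto_def)

lemma hom_AutoGroup_apply_hom:
  assumes "\<mu> \<in> hom G (AutoGroup H)" and "x \<in> carrier G"
  shows "\<mu> x \<in> hom H H"
  using assms by (auto simp: hom_def AutoGroup_def BijGroup_def auto_def)

definition orbit_exponents ::
  "('g, 'c) monoid_scheme \<Rightarrow> ('g \<Rightarrow> 'h \<Rightarrow> 'h) \<Rightarrow> ('h, 'd) monoid_scheme \<Rightarrow> 'h \<Rightarrow> nat set" where
  "orbit_exponents G \<mu> H \<tau> = {a. \<exists>x \<in> carrier G. \<mu> x \<tau> = \<tau> [^]\<^bsub>H\<^esub> a}"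

lemma one_in_orbit_exponents:
  assumes "group G" and "group H" and "\<mu> \<in> hom G (AutoGroup H)" and "\<tau> \<in> carrier H"
  shows "1 \<in> orbit_exponents G \<mu> H \<tau>"
proof -
  interpret G: group G by fact
  interpret H: group H by fact
  interpret group_action G "carrier H" \<mu>
    using assms(1-3) by (rule group_action_of_hom_AutoGroup)
  have "\<mu> \<one>\<^bsub>G\<^esub> \<tau> = \<tau>"
    using id_eq_one assms(4) by (metis restrict_apply)
  then have "\<mu> \<one>\<^bsub>G\<^esub> \<tau> = \<tau> [^]\<^bsub>H\<^esub> (1 :: nat)"
    using assms(4) by simp
  then show ?thesis
    unfolding orbit_exponents_def using G.one_closed by blast
qed

lemma orbit_exponents_mult_closed:
  assumes "group G" and "group H" and "\<mu> \<in> hom G (AutoGroup H)" and "\<tau> \<in> carrier H"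
    and "a \<in> orbit_exponents G \<mu> H \<tau>" and "b \<in> orbit_exponents G \<mu> H \<tau>"
  shows "a * b \<in> orbit_exponents G \<mu> H \<tau>"
proof -
  interpret G: group G by fact
  interpret H: group H by fact
  interpret group_action G "carrier H" \<mu>
    using assms(1-3) by (rule group_action_of_hom_AutoGroup)
  obtain x y where x: "x \<in> carrier G" "\<mu> x \<tau> = \<tau> [^]\<^bsub>H\<^esub> a"
    and y: "y \<in> carrier G" "\<mu> y \<tau> = \<tau> [^]\<^bsub>H\<^esub> b"
    using assms(5,6) unfolding orbit_exponents_def by blast
  have "\<mu> (x \<otimes>\<^bsub>G\<^esub> y) \<tau> = \<mu> x (\<tau> [^]\<^bsub>H\<^esub> b)"
    using composition_rule[OF assms(4) x(1) y(1)] y(2) by simp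
  also have "\<dots> = (\<tau> [^]\<^bsub>H\<^esub> a) [^]\<^bsub>H\<^esub> b"
    using hom_nat_pow[OF hom_AutoGroup_apply_hom[OF assms(3) x(1)] assms(4)] x(2)
    by (simp add: H.is_group)
  also have "\<dots> = \<tau> [^]\<^bsub>H\<^esub> (a * b)"
    using assms(4) by (simp add: H.nat_pow_pow)
  finally show ?thesis
    unfolding orbit_exponents_def using x(1) y(1) by blast
qed

lemma orbit_exponents_cong:
  assumes "group H" and "\<tau> \<in> carrier H"
    and "[a = b] (mod group.ord H \<tau>)" and "a \<in> orbit_exponents G \<mu> H \<tau>"
  shows "b \<in> orbit_exponents G \<mu> H \<tau>"
  using assms group.nat_pow_eq_if_cong_ord[OF assms(1,2,3)] by (simp add: orbit_exponents_def)

lemma subgroup_Gal_group_cyc_char_preimage: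
  assumes K: "cx_subfield K" and "k \<subseteq> K" and "zeta t \<in> K" and "0 < t"
    and "1 \<in> S" and "\<And>a b. a \<in> S \<Longrightarrow> b \<in> S \<Longrightarrow> a * b \<in> S"
    and "\<And>a b. [a = b] (mod t) \<Longrightarrow> a \<in> S \<Longrightarrow> b \<in> S"
  shows "subgroup {g \<in> Gal_set K k. cyc_char t g \<in> S} (Gal_group K k)"
proof -
  have "subgroup {g \<in> carrier (Gal_group K k). cyc_char t g \<in> S} (Gal_group K k)"
    using group_Gal_group[OF K \<open>k \<subseteq> K\<close>] \<open>0 < t\<close>
  proof (rule subgroup_character_preimage)
    show "[cyc_char t (g \<otimes>\<^bsub>Gal_group K k\<^esub> h) = cyc_char t g * cyc_char t h] (mod t)"
      if "g \<in> carrier (Gal_group K k)" "h \<in> carrier (Gal_group K k)" for g h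
      using that cyc_char_comp[OF K \<open>k \<subseteq> K\<close> _ _ \<open>zeta t \<in> K\<close> \<open>0 < t\<close>]
      by (simp add: Gal_group_def)
    show "coprime (cyc_char t g) t" if "g \<in> carrier (Gal_group K k)" for g
      using that cyc_char(1)[OF K \<open>k \<subseteq> K\<close> _ \<open>zeta t \<in> K\<close> \<open>0 < t\<close>]
      by (simp add: Gal_group_def)
  qed (use assms in auto)
  then show ?thesis
    by (simp add: Gal_group_def)
qed

theorem mainTheorem16:
  fixes k :: "complex set" and GG :: "('g, 'c) monoid_scheme" and H :: "('h, 'd) monoid_scheme"
    and \<mu> :: "'g \<Rightarrow> 'h \<Rightarrow> 'h" and \<tau> :: 'h
  assumes "number_field k"
    and "group GG" and "finite (carrier GG)"
    and "comm_group H" and "finite (carrier H)"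
    and "\<mu> \<in> hom GG (AutoGroup H)"
    and "\<tau> \<in> carrier H"
  shows "subgroup (G_kmt k GG \<mu> H \<tau>)
           (Gal_group (field_adjoin k {zeta (group.ord H \<tau>)}) k)"
proof -
  interpret H: comm_group H by fact
  let ?t = "H.ord \<tau>" and ?K = "field_adjoin k {zeta (H.ord \<tau>)}"
  have "0 < ?t"
    using H.ord_ge_1[OF assms(5,7)] by simp
  have "cx_subfield ?K" and "k \<subseteq> ?K" and "zeta ?t \<in> ?K"
    unfolding field_adjoin_def cx_subfield_def by auto
  then have "subgroup {g \<in> Gal_set ?K k. cyc_char ?t g \<in> orbit_exponents GG \<mu> H \<tau>} (Gal_group ?K k)"
    using \<open>0 < ?t\<close> one_in_orbit_exponents[OF assms(2) H.is_group assms(6,7)]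
      orbit_exponents_mult_closed[OF assms(2) H.is_group assms(6,7)]
      orbit_exponents_cong[OF H.is_group assms(7)]
    by (rule subgroup_Gal_group_cyc_char_preimage)
  then show ?thesis
    by (simp add: G_kmt_def orbit_exponents_def Let_def)
qed

end
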